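(* Let $\theta>0$ and let $\langle\cdot\rangle'_{n;\theta}$ denote expectation with respect to the probability measure $M'_{n;\theta}$ on $\mathbb Y_n$. For any $F\in\mathcal A_\theta$, $\langle F\rangle'_{n;\theta}=\sum_{\lambda\in\mathbb Y_n}F(\lambda)M'_{n;\theta}(\lambda)$ is a polynomial in $n$ of degree at most $\deg F$ (degree with respect to the filtration of $\mathcal A_\theta$).
   Context: $\mathbb Y$: Young diagrams; $\mathbb Y_n$: those with $n$ boxes; $\lambda_i$ row lengths, $\ell(\lambda)$ number of nonzero rows. $\mathcal A_\theta$ is the unital $\mathbb R$-algebra of functions on $\mathbb Y$ generated by the algebraically independent functions $p^*_{m;\theta}(\lambda)=\sum_{i=1}^{\ell(\lambda)}[(\lambda_i-\theta i)^m-(-\theta i)^m]$, $m\ge1$, filtered by $\deg p^*_{m;\theta}=m$. Kerov coordinates: draw $\lambda$ in English convention (rows downward, columns rightward); the border of $\lambda$ has $2d-1$ corners $(r_k,s_k)$ ordered along the path from $+\infty$ on the horizontal axis to $+\infty$ on the vertical axis, odd $k$ being inner corners and even $k$ outer corners; $x_i=s_{2i-1}-\theta r_{2i-1}$ ($1\le i\le d$), $y_j=s_{2j}-\theta r_{2j}$ ($1\le j\le d-1$). Let $\pi^\uparrow_i(\lambda)=\prod_{j=1}^{d-1}(x_i-y_j)/\prod_{l\ne i}(x_i-x_l)$; these are positive and sum to $1$. The inner corner $(r_{2i-1},s_{2i-1})$ corresponds to the box $\square_i$ in row $r_{2i-1}+1$, column $s_{2i-1}+1$, which can be added to $\lambda$;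 the diagrams $\nu$ with $\nu\searrow\lambda$ (obtained from $\lambda$ by adding one box) are exactly $\lambda\cup\square_i$, $1\le i\le d$. Set $p^\uparrow_{n;\theta}(\lambda,\lambda\cup\square_i)=\pi^\uparrow_i(\lambda)$ for $\lambda\in\mathbb Y_n$. The measures $M'_{n;\theta}$ on $\mathbb Y_n$ are defined by $M'_{0;\theta}(\varnothing)=1$ and $M'_{n+1;\theta}(\nu)=\sum_{\lambda\in\mathbb Y_n:\,\lambda\nearrow\nu}M'_{n;\theta}(\lambda)p^\uparrow_{n;\theta}(\lambda,\nu)$. *)

theory Defs
  imports "HOL-Computational_Algebra.Polynomial"
begin

text \<open>Young diagrams are encoded as lists of row lengths lambda_1 >= lambda_2 >= ... > 0
  (English convention: row i has lambda_i boxes, rows numbered 1,2,... downward,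
  columns 1,2,... rightward).\<close>

definition young :: "nat list \<Rightarrow> bool" where
  "young la \<longleftrightarrow> sorted_wrt (\<ge>) la \<and> 0 \<notin> set la"

definition YY :: "nat \<Rightarrow> nat list set" where
  "YY n = {la. young la \<and> sum_list la = n}"

definition row :: "nat list \<Rightarrow> nat \<Rightarrow> nat" where
  "row la i = (if 1 \<le> i \<and> i \<le> length la then la ! (i - 1) else 0)"

definition pstar :: "real \<Rightarrow> nat \<Rightarrow> nat list \<Rightarrow> real" where
  "pstar th m la = (\<Sum>i=1..length la.
      (real (row la i) - th * real i) ^ m - (- th * real i) ^ m)"

definition Adeg :: "real \<Rightarrow> nat \<Rightarrow> (nat list \<Rightarrow> real) set" where
  "Adeg th d = {F. \<exists>S c. finite S \<and>
      (\<forall>ms\<in>S. (\<forall>m\<in>set ms. 1 \<le> m) \<and> sum_list ms \<le> d) \<and>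
      (\<forall>la. young la \<longrightarrow>
         F la = (\<Sum>ms\<in>S. c ms * prod_list (map (\<lambda>m. pstar th m la) ms)))}"

text \<open>Rows a in which a box can be added (the box is then at row a, column row la a + 1).
  Its inner corner is (r,s) = (a-1, row la a).\<close>
definition addable_rows :: "nat list \<Rightarrow> nat set" where
  "addable_rows la = {a. 1 \<le> a \<and> a \<le> length la + 1 \<and> (a = 1 \<or> row la a < row la (a - 1))}"

text \<open>Rows a whose last box (at row a, column row la a) is removable;
  its outer corner is (r,s) = (a, row la a).\<close>
definition removable_rows :: "nat list \<Rightarrow> nat set" where
  "removable_rows la = {a. 1 \<le> a \<and> a \<le> length la \<and> row la (a + 1) < row la a}"

definition xK :: "real \<Rightarrow> nat list \<Rightarrow> nat \<Rightarrow> real" where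
  "xK th la a = real (row la a) - th * real (a - 1)"

definition yK :: "real \<Rightarrow> nat list \<Rightarrow> nat \<Rightarrow> real" where
  "yK th la a = real (row la a) - th * real a"

definition pi_up :: "real \<Rightarrow> nat list \<Rightarrow> nat \<Rightarrow> real" where
  "pi_up th la a = (\<Prod>b\<in>removable_rows la. xK th la a - yK th la b)
                   / (\<Prod>c\<in>addable_rows la - {a}. xK th la a - xK th la c)"

definition add_box :: "nat list \<Rightarrow> nat \<Rightarrow> nat list" where
  "add_box la a = (if a = length la + 1 then la @ [1] else la[a - 1 := la ! (a - 1) + 1])"

definition up_rel :: "nat list \<Rightarrow> nat list \<Rightarrow> bool" where
  "up_rel la nu \<longleftrightarrow> nu \<in> add_box la ` addable_rows la"

definition p_up :: "real \<Rightarrow> nat list \<Rightarrow> nat list \<Rightarrow> real" where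
  "p_up th la nu = (\<Sum>a\<in>addable_rows la. if add_box la a = nu then pi_up th la a else 0)"

primrec Mp :: "real \<Rightarrow> nat \<Rightarrow> nat list \<Rightarrow> real" where
  "Mp th 0 nu = (if nu = [] then 1 else 0)"
| "Mp th (Suc n) nu = (\<Sum>la\<in>{la\<in>YY n. up_rel la nu}. Mp th n la * p_up th la nu)"

end

theory Submission
  imports Defs "HOL-Computational_Algebra.Polynomial_FPS"
begin

text \<open>
  Since M'_n is built by the up-chain, E_{n+1}[F] = E_n[U F] for the up operator
  (U F)(la) = sum_a pi_a(la) F(la + box_a).  The key fact is that U - id lowers the degree
  by one.  Adding box a raises p^*_m by g_m(x_a) with deg g_m = m - 1, so expanding a
  monomial in the p^*_m reduces this to: the moments mu_k = sum_a pi_a x_a^k of the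
  transition measure have degree k.  That follows from the Lagrange identity
  sum_a pi_a/(1 - x_a z) = prod_b (1 - y_b z)/prod_a (1 - x_a z), whose logarithmic
  derivative yields k mu_k = sum_{i<k} mu_i q_{k-i}, where the corner power sums q_j are
  explicit combinations of the p^*_i, i < j.  Then E_{n+1}[F] - E_n[F] = E_n[U F - F] is a
  polynomial of degree d - 1 by induction on d, and summing (Faulhaber) gives degree d.
\<close>

subsection \<open>Rows and corners of Young diagrams\<close>

lemma young_nth_mono:
  assumes "young la" "i < j" "j < length la"
  shows "la ! j \<le> la ! i"
  using assms unfolding young_def by (auto simp: sorted_wrt_iff_nth_less)

lemma young_pos:
  assumes "young la" "i < length la"
  shows "la ! i > 0"
  using assms unfolding young_def by (metis gr0I nth_mem)

lemma row_mono:
  assumes "young la" "1 \<le> i" "i \<le> j"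
  shows "row la j \<le> row la i"
proof (cases "j \<le> length la")
  case True
  then show ?thesis using assms young_nth_mono[of la "i - 1" "j - 1"]
    by (cases "i = j") (auto simp: row_def)
qed (auto simp: row_def)

lemma row_pos_iff:
  assumes "young la"
  shows "row la i > 0 \<longleftrightarrow> 1 \<le> i \<and> i \<le> length la"
  using assms young_pos[of la "i - 1"] by (auto simp: row_def)

text \<open>Being a Young diagram is a property of the row-length function alone; this is how
  we show that adding a box at an addable row yields a Young diagram.\<close>
lemma young_iff_row:
  "young la \<longleftrightarrow> (\<forall>i. 1 \<le> i \<longrightarrow> i \<le> length la \<longrightarrow> row la i > 0) \<and>
      (\<forall>i j. 1 \<le> i \<longrightarrow> i < j \<longrightarrow> j \<le> length la \<longrightarrow> row la j \<le> row la i)"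
    (is "_ \<longleftrightarrow> ?pos \<and> ?mono")
proof
  assume "young la"
  then show "?pos \<and> ?mono" using row_pos_iff row_mono by auto
next
  assume h: "?pos \<and> ?mono"
  have "0 \<notin> set la"
  proof
    assume "0 \<in> set la"
    then obtain k where "k < length la" "la ! k = 0" by (auto simp: in_set_conv_nth)
    then show False using h[THEN conjunct1, rule_format, of "Suc k"] by (auto simp: row_def)
  qed
  moreover have "sorted_wrt (\<ge>) la"
    unfolding sorted_wrt_iff_nth_less
  proof (intro allI impI)
    fix i j assume "i < j" "j < length la"
    then show "la ! j \<le> la ! i"
      using h[THEN conjunct2, rule_format, of "Suc i" "Suc j"] by (auto simp: row_def)
  qed
  ultimately show "young la" by (simp add: young_def)
qed

lemma finite_addable: "finite (addable_rows la)"
  by (rule finite_subset[of _ "{1..length la + 1}"]) (auto simp: addable_rows_def)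

lemma finite_removable: "finite (removable_rows la)"
  by (rule finite_subset[of _ "{1..length la}"]) (auto simp: removable_rows_def)

lemma addable_strict:
  assumes "young la" "a \<in> addable_rows la" "a' \<in> addable_rows la" "a < a'"
  shows "row la a' < row la a"
proof -
  have "a' \<ge> 2" using assms by (auto simp: addable_rows_def)
  then have "row la a' < row la (a' - 1)" using assms by (auto simp: addable_rows_def)
  also have "row la (a' - 1) \<le> row la a" using assms
    by (intro row_mono) (auto simp: addable_rows_def)
  finally show ?thesis .
qed

text \<open>Hence, for theta >= 0, the inner-corner coordinates x_a are pairwise distinct,
  so the denominators of pi_up do not vanish.\<close>
lemma xK_inj:
  assumes "young la" "th \<ge> 0"
  shows "inj_on (xK th la) (addable_rows la)"
proof -
  have "xK th la a' < xK th la a"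
    if "a \<in> addable_rows la" "a' \<in> addable_rows la" "a < a'" for a a'
  proof -
    have "row la a' < row la a" using addable_strict assms that by blast
    moreover have "th * real (a - 1) \<le> th * real (a' - 1)" using that assms
      by (intro mult_left_mono) auto
    ultimately show ?thesis unfolding xK_def by linarith
  qed
  then show ?thesis by (metis inj_onI less_irrefl linorder_neqE_nat)
qed

text \<open>Interlacing of corners: along the border, inner and outer corners alternate, so a sum
  over the inner corners minus a sum over the outer corners telescopes into a sum over all
  rows: for a row i + 1 that is not addable, x_{i+1} coincides with y_i.\<close>
lemma corner_telescope:
  fixes f :: "real \<Rightarrow> real"
  assumes "young la"
  shows "(\<Sum>a\<in>addable_rows la. f (xK th la a)) - (\<Sum>b\<in>removable_rows la. f (yK th la b))
       = (\<Sum>i=1..length la. f (xK th la i) - f (yK th la i)) + f (xK th la (length la + 1))"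
proof -
  define l where "l = length la"
  define A where "A = addable_rows la"
  define R where "R = removable_rows la"
  define NA where "NA = {1..l+1} - A"
  define NR where "NR = {1..l} - R"
  have A_sub: "A \<subseteq> {1..l+1}" by (auto simp: A_def addable_rows_def l_def)
  have R_sub: "R \<subseteq> {1..l}" by (auto simp: R_def removable_rows_def l_def)
  have flat: "row la (Suc j) = row la j" if "j \<in> NR" for j
  proof -
    from that have "1 \<le> j" "row la j \<le> row la (j + 1)"
      by (auto simp: NR_def R_def removable_rows_def l_def)
    then show ?thesis using row_mono[OF assms, of j "j + 1"] by simp
  qed
  have NR_img: "NA = Suc ` NR"
  proof (intro set_eqI iffI)
    fix i assume i: "i \<in> NA"
    then have i1: "1 \<le> i" "i \<le> l + 1" "i \<noteq> 1" "row la (i - 1) \<le> row la i"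
      by (auto simp: NA_def A_def addable_rows_def l_def)
    have eq: "row la i = row la (i - 1)" using i1 row_mono[OF assms, of "i - 1" i] by simp
    have "i \<le> l"
    proof (rule ccontr)
      assume "\<not> i \<le> l"
      then have "i = l + 1" using i1 by linarith
      then show False using eq row_pos_iff[OF assms, of "i - 1"] row_pos_iff[OF assms, of i] i1
        by (simp add: l_def)
    qed
    then have "i - 1 \<in> NR" using i1 eq by (auto simp: NR_def R_def removable_rows_def l_def)
    then show "i \<in> Suc ` NR" using i1 by (auto intro!: image_eqI[of _ _ "i - 1"])
  next
    fix i assume "i \<in> Suc ` NR"
    then obtain j where j: "j \<in> NR" "i = Suc j" by auto
    then have "1 \<le> j" "j \<le> l" "row la j \<le> row la (j + 1)"
      by (auto simp: NR_def R_def removable_rows_def l_def)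
    then show "i \<in> NA" using j by (auto simp: NA_def A_def addable_rows_def l_def)
  qed
  have s1: "(\<Sum>i=1..l+1. f (xK th la i)) = (\<Sum>a\<in>A. f (xK th la a)) + (\<Sum>i\<in>NA. f (xK th la i))"
    unfolding NA_def using A_sub by (subst sum.subset_diff[of A]) auto
  have s2: "(\<Sum>i=1..l. f (yK th la i)) = (\<Sum>b\<in>R. f (yK th la b)) + (\<Sum>i\<in>NR. f (yK th la i))"
    unfolding NR_def using R_sub by (subst sum.subset_diff[of R]) auto
  have s3: "(\<Sum>i\<in>NA. f (xK th la i)) = (\<Sum>i\<in>NR. f (yK th la i))"
    unfolding NR_img by (subst sum.reindex) (auto simp: flat xK_def yK_def)
  show ?thesis using s1 s2 s3 unfolding A_def[symmetric] R_def[symmetric] l_def[symmetric]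
    by (simp add: sum_subtractf)
qed

lemma card_addable:
  assumes "young la"
  shows "card (addable_rows la) = card (removable_rows la) + 1"
proof -
  have "real (card (addable_rows la)) - real (card (removable_rows la)) = 1"
    using corner_telescope[OF assms, of "\<lambda>_. 1" 0] by simp
  then show ?thesis by linarith
qed

lemma row_add_box:
  assumes "a \<in> addable_rows la"
  shows "row (add_box la a) i = row la i + (if i = a then 1 else 0)"
proof (cases "a = length la + 1")
  case False
  with assms have "1 \<le> a" "a \<le> length la" by (auto simp: addable_rows_def)
  then show ?thesis using False by (auto simp: add_box_def row_def nth_list_update)
qed (auto simp: add_box_def row_def nth_append)

lemma length_add_box:
  "length (add_box la a) = (if a = length la + 1 then length la + 1 else length la)"
  by (auto simp: add_box_def)

lemma young_add_box:
  assumes y: "young la" and a: "a \<in> addable_rows la"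
  shows "young (add_box la a)"
  unfolding young_iff_row
proof (intro conjI allI impI)
  fix i assume "1 \<le> i" "i \<le> length (add_box la a)"
  then show "row (add_box la a) i > 0"
    using row_pos_iff[OF y, of i] a by (auto simp: row_add_box length_add_box split: if_splits)
next
  fix i j assume ij: "1 \<le> i" "i < j" "j \<le> length (add_box la a)"
  show "row (add_box la a) j \<le> row (add_box la a) i"
  proof (cases "j = a")
    case True
    then have "row la a < row la (a - 1)" using a ij by (auto simp: addable_rows_def)
    moreover have "row la (a - 1) \<le> row la i" using row_mono[OF y, of i "a - 1"] ij True by simp
    ultimately show ?thesis using True ij a by (auto simp: row_add_box)
  qed (use row_mono[OF y, of i j] ij a in \<open>auto simp: row_add_box\<close>)
qed

lemma sum_list_add_box:
  assumes "a \<in> addable_rows la"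
  shows "sum_list (add_box la a) = sum_list la + 1"
proof (cases "a = length la + 1")
  case False
  with assms have "a - 1 < length la" by (auto simp: addable_rows_def)
  then show ?thesis using False by (simp add: add_box_def sum_list_update)
qed (simp add: add_box_def)

lemma add_box_inj: "inj_on (add_box la) (addable_rows la)"
proof (rule inj_onI)
  fix a a' assume h: "a \<in> addable_rows la" "a' \<in> addable_rows la" "add_box la a = add_box la a'"
  then have "row (add_box la a) a = row (add_box la a') a" by simp
  then have "row la a + 1 = row la a + (if a = a' then 1 else 0)"
    using row_add_box[OF h(1), of a] row_add_box[OF h(2), of a] by (simp add: eq_commute)
  then show "a = a'" by (simp split: if_splits)
qed

subsection \<open>The expectation recursion\<close>

lemma length_le_sum_list: "(\<forall>x\<in>set xs. 1 \<le> x) \<Longrightarrow> length xs \<le> sum_list (xs :: nat list)"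
  by (induction xs) auto

lemma finite_YY: "finite (YY n)"
proof (rule finite_subset)
  show "YY n \<subseteq> {xs. set xs \<subseteq> {0..n} \<and> length xs \<le> n}"
  proof
    fix xs assume "xs \<in> YY n"
    then have y: "young xs" "sum_list xs = n" by (auto simp: YY_def)
    then have "\<forall>x\<in>set xs. 1 \<le> x" by (auto simp: young_def Suc_le_eq intro: gr0I)
    then have "length xs \<le> n" using length_le_sum_list y by metis
    moreover have "set xs \<subseteq> {0..n}" using member_le_sum_list y by fastforce
    ultimately show "xs \<in> {xs. set xs \<subseteq> {0..n} \<and> length xs \<le> n}" by simp
  qed
  show "finite {xs. set xs \<subseteq> {0..n} \<and> length xs \<le> n}"
    by (rule finite_lists_length_le) simp
qed

lemma YY_0: "YY 0 = {[]}"
proof (intro set_eqI iffI)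
  fix xs assume "xs \<in> YY 0"
  then have "0 \<notin> set xs" "\<forall>x\<in>set xs. x = 0" by (auto simp: YY_def young_def)
  then show "xs \<in> {[]}" by (cases xs) auto
qed (auto simp: YY_def young_def)

lemma up_set:
  assumes "la \<in> YY n"
  shows "{nu \<in> YY (Suc n). up_rel la nu} = add_box la ` addable_rows la"
  using assms young_add_box sum_list_add_box by (auto simp: up_rel_def YY_def)

lemma p_up_add_box:
  assumes "a \<in> addable_rows la"
  shows "p_up th la (add_box la a) = pi_up th la a"
proof -
  have "p_up th la (add_box la a) = (\<Sum>a'\<in>addable_rows la. if a' = a then pi_up th la a' else 0)"
    unfolding p_up_def by (rule sum.cong) (use add_box_inj assms in \<open>auto dest: inj_onD\<close>)
  then show ?thesis using assms finite_addable by simp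
qed

definition expect :: "real \<Rightarrow> nat \<Rightarrow> (nat list \<Rightarrow> real) \<Rightarrow> real" where
  "expect th n F = (\<Sum>la\<in>YY n. F la * Mp th n la)"

definition up_op :: "real \<Rightarrow> (nat list \<Rightarrow> real) \<Rightarrow> nat list \<Rightarrow> real" where
  "up_op th F la = (\<Sum>a\<in>addable_rows la. pi_up th la a * F (add_box la a))"

lemma expect_Suc: "expect th (Suc n) F = expect th n (up_op th F)"
proof -
  have "expect th (Suc n) F = (\<Sum>nu\<in>YY (Suc n). \<Sum>la\<in>YY n.
           if up_rel la nu then F nu * (Mp th n la * p_up th la nu) else 0)"
    unfolding expect_def Mp.simps
    by (simp add: sum_distrib_left sum.inter_filter[OF finite_YY] if_distrib cong: if_cong)
  also have "\<dots> = (\<Sum>la\<in>YY n. \<Sum>nu\<in>YY (Suc n).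
           if up_rel la nu then F nu * (Mp th n la * p_up th la nu) else 0)"
    by (rule sum.swap)
  also have "\<dots> = (\<Sum>la\<in>YY n. Mp th n la *
      (\<Sum>nu\<in>{nu \<in> YY (Suc n). up_rel la nu}. F nu * p_up th la nu))"
    by (simp add: sum.inter_filter[OF finite_YY] sum_distrib_left if_distrib mult_ac cong: if_cong)
  also have "\<dots> = (\<Sum>la\<in>YY n. Mp th n la * up_op th F la)"
  proof (rule sum.cong[OF refl])
    fix la assume la: "la \<in> YY n"
    have "(\<Sum>nu\<in>{nu \<in> YY (Suc n). up_rel la nu}. F nu * p_up th la nu)
        = (\<Sum>a\<in>addable_rows la. F (add_box la a) * p_up th la (add_box la a))"
      unfolding up_set[OF la] by (rule sum.reindex[OF add_box_inj, unfolded comp_def])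
    also have "\<dots> = up_op th F la"
      unfolding up_op_def by (rule sum.cong) (auto simp: p_up_add_box)
    finally show "Mp th n la * (\<Sum>nu\<in>{nu \<in> YY (Suc n). up_rel la nu}. F nu * p_up th la nu)
        = Mp th n la * up_op th F la" by simp
  qed
  finally show ?thesis unfolding expect_def by (simp add: mult_ac)
qed

lemma expect_cong: "(\<And>la. young la \<Longrightarrow> F la = G la) \<Longrightarrow> expect th n F = expect th n G"
  unfolding expect_def by (rule sum.cong) (auto simp: YY_def)

lemma expect_add: "expect th n (\<lambda>la. F la + G la) = expect th n F + expect th n G"
  unfolding expect_def by (simp add: sum.distrib algebra_simps)

lemma expect_scale: "expect th n (\<lambda>la. c * F la) = c * expect th n F"
  unfolding expect_def by (simp add: sum_distrib_left mult_ac)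

subsection \<open>The filtration of A_theta on Young diagrams\<close>

definition pmon :: "real \<Rightarrow> nat list \<Rightarrow> nat list \<Rightarrow> real" where
  "pmon th ms la = prod_list (map (\<lambda>m. pstar th m la) ms)"

definition lincomb :: "real \<Rightarrow> (real \<times> nat list) list \<Rightarrow> nat list \<Rightarrow> real" where
  "lincomb th L la = (\<Sum>(c, ms)\<leftarrow>L. c * pmon th ms la)"

text \<open>This list-based form of Adeg is convenient because products of combinations are
  again given by lists.\<close>
definition Afil :: "real \<Rightarrow> nat \<Rightarrow> (nat list \<Rightarrow> real) \<Rightarrow> bool" where
  "Afil th d F \<longleftrightarrow> (\<exists>L. (\<forall>(c, ms)\<in>set L. (\<forall>m\<in>set ms. 1 \<le> m) \<and> sum_list ms \<le> d) \<and>
      (\<forall>la. young la \<longrightarrow> F la = lincomb th L la))"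

lemma Afil_cong: "Afil th d F \<Longrightarrow> (\<And>la. young la \<Longrightarrow> G la = F la) \<Longrightarrow> Afil th d G"
  unfolding Afil_def by auto

lemma Afil_mono: "Afil th d F \<Longrightarrow> d \<le> d' \<Longrightarrow> Afil th d' F"
  unfolding Afil_def by fastforce

lemma Afil_const: "Afil th d (\<lambda>_. c)"
  unfolding Afil_def by (rule exI[of _ "[(c, [])]"]) (simp add: lincomb_def pmon_def)

lemma Afil_pstar:
  assumes "m \<le> d"
  shows "Afil th d (pstar th m)"
proof (cases m)
  case 0
  then show ?thesis using Afil_const[of th d 0] by (rule_tac Afil_cong) (auto simp: pstar_def)
next
  case (Suc k)
  then show ?thesis unfolding Afil_def using assms
    by (intro exI[of _ "[(1, [m])]"]) (simp add: lincomb_def pmon_def)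
qed

lemma Afil_add:
  assumes "Afil th d F" "Afil th d G"
  shows "Afil th d (\<lambda>la. F la + G la)"
proof -
  obtain L1 L2 where
    L1: "\<forall>(c, ms)\<in>set L1. (\<forall>m\<in>set ms. 1 \<le> m) \<and> sum_list ms \<le> d"
        "\<forall>la. young la \<longrightarrow> F la = lincomb th L1 la" and
    L2: "\<forall>(c, ms)\<in>set L2. (\<forall>m\<in>set ms. 1 \<le> m) \<and> sum_list ms \<le> d"
        "\<forall>la. young la \<longrightarrow> G la = lincomb th L2 la"
    using assms unfolding Afil_def by blast
  show ?thesis unfolding Afil_def using L1 L2
    by (intro exI[of _ "L1 @ L2"]) (auto simp: lincomb_def)
qed

definition lc_mult :: "(real \<times> nat list) list \<Rightarrow> (real \<times> nat list) list \<Rightarrow> (real \<times> nat list) list" where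
  "lc_mult L1 L2 = concat (map (\<lambda>(c1, m1). map (\<lambda>(c2, m2). (c1 * c2, m1 @ m2)) L2) L1)"

lemma lincomb_mult: "lincomb th (lc_mult L1 L2) la = lincomb th L1 la * lincomb th L2 la"
proof -
  have single: "lincomb th (map (\<lambda>(c2, m2). (c1 * c2, m1 @ m2)) L2) la
      = c1 * pmon th m1 la * lincomb th L2 la" for c1 m1
    by (induction L2) (auto simp: lincomb_def pmon_def algebra_simps)
  show ?thesis
  proof (induction L1)
    case (Cons p L1)
    obtain c1 m1 where p: "p = (c1, m1)" by (cases p)
    have "lincomb th (lc_mult (p # L1) L2) la
        = lincomb th (map (\<lambda>(c2, m2). (c1 * c2, m1 @ m2)) L2) la + lincomb th (lc_mult L1 L2) la"
      by (simp add: p lc_mult_def lincomb_def)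
    also have "\<dots> = c1 * pmon th m1 la * lincomb th L2 la + lincomb th L1 la * lincomb th L2 la"
      by (simp only: single Cons.IH)
    also have "\<dots> = lincomb th (p # L1) la * lincomb th L2 la"
      by (simp add: p lincomb_def algebra_simps)
    finally show ?case .
  qed (simp add: lc_mult_def lincomb_def)
qed

lemma Afil_mult:
  assumes "Afil th d1 F" "Afil th d2 G" "d1 + d2 \<le> d"
  shows "Afil th d (\<lambda>la. F la * G la)"
proof -
  obtain L1 L2 where
    L1: "\<forall>(c, ms)\<in>set L1. (\<forall>m\<in>set ms. 1 \<le> m) \<and> sum_list ms \<le> d1"
        "\<forall>la. young la \<longrightarrow> F la = lincomb th L1 la" and
    L2: "\<forall>(c, ms)\<in>set L2. (\<forall>m\<in>set ms. 1 \<le> m) \<and> sum_list ms \<le> d2"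
        "\<forall>la. young la \<longrightarrow> G la = lincomb th L2 la"
    using assms(1,2) unfolding Afil_def by blast
  have "\<forall>(c, ms)\<in>set (lc_mult L1 L2). (\<forall>m\<in>set ms. 1 \<le> m) \<and> sum_list ms \<le> d"
    using L1(1) L2(1) assms(3) by (fastforce simp: lc_mult_def)
  then show ?thesis unfolding Afil_def using L1(2) L2(2)
    by (intro exI[of _ "lc_mult L1 L2"]) (auto simp: lincomb_mult)
qed

lemma Afil_scale: "Afil th d F \<Longrightarrow> Afil th d (\<lambda>la. c * F la)"
  using Afil_mult[OF Afil_const] by simp

lemma Afil_sum:
  "finite S \<Longrightarrow> (\<And>i. i \<in> S \<Longrightarrow> Afil th d (f i)) \<Longrightarrow> Afil th d (\<lambda>la. \<Sum>i\<in>S. f i la)"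
  by (induction S rule: finite_induct) (auto intro: Afil_add Afil_const)

lemma Afil_pmon: "\<forall>m\<in>set ms. 1 \<le> m \<Longrightarrow> Afil th (sum_list ms) (pmon th ms)"
proof (induction ms)
  case Nil then show ?case using Afil_const[of th 0 1] by (simp add: pmon_def[abs_def])
next
  case (Cons m ms)
  then show ?case using Afil_mult[OF Afil_pstar[of m m th] Cons.IH, of "sum_list (m # ms)"]
    by (simp add: pmon_def[abs_def])
qed

lemma Adeg_imp_Afil:
  assumes "F \<in> Adeg th d"
  shows "Afil th d F"
proof -
  obtain S c where S: "finite S" "\<forall>ms\<in>S. (\<forall>m\<in>set ms. 1 \<le> m) \<and> sum_list ms \<le> d"
    "\<forall>la. young la \<longrightarrow> F la = (\<Sum>ms\<in>S. c ms * prod_list (map (\<lambda>m. pstar th m la) ms))"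
    using assms unfolding Adeg_def by blast
  have "Afil th d (\<lambda>la. \<Sum>ms\<in>S. c ms * pmon th ms la)"
    using S(1,2) by (intro Afil_sum Afil_scale Afil_mono[OF Afil_pmon]) auto
  then show ?thesis by (rule Afil_cong) (use S(3) in \<open>simp add: pmon_def\<close>)
qed

subsection \<open>The transition measure: Lagrange interpolation\<close>

lemma degree_prod_linear:
  assumes fS: "finite S"
  shows "degree (\<Prod>c\<in>S. [:a c, b c:]) \<le> card S"
proof -
  have linear: "degree [:a c, b c:] \<le> 1" for c
    by (rule order.trans[OF degree_pCons_le]) simp
  have "degree (\<Prod>c\<in>S. [:a c, b c:]) \<le> sum (degree \<circ> (\<lambda>c. [:a c, b c:])) S"
    by (rule degree_prod_sum_le[OF fS])
  also have "\<dots> \<le> (\<Sum>c\<in>S. 1)" by (rule sum_mono) (simp only: o_def linear)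
  finally show ?thesis by simp
qed

text \<open>The weights pi_up are the Lagrange coefficients of prod_b (z - y_b) at the nodes x_a:
  sum_a pi_a prod_{c /= a} (z - x_c) = prod_b (z - y_b).  Both sides have degree < #nodes
  and agree at every node.\<close>
lemma lagrange_z:
  assumes y: "young la" and th: "th \<ge> 0"
  shows "(\<Sum>a\<in>addable_rows la. smult (pi_up th la a)
            (\<Prod>c\<in>addable_rows la - {a}. [:- xK th la c, 1:]))
       = (\<Prod>b\<in>removable_rows la. [:- yK th la b, 1:])"
    (is "?L = ?R")
proof -
  define A where "A = addable_rows la"
  define R where "R = removable_rows la"
  have fA: "finite A" and fR: "finite R" by (simp_all add: A_def R_def finite_addable finite_removable)
  have inj: "inj_on (xK th la) A" using xK_inj[OF y th] by (simp add: A_def)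
  have cA: "card A = card R + 1" using card_addable[OF y] by (simp add: A_def R_def)
  have degL: "degree ?L \<le> card R"
    unfolding A_def[symmetric]
  proof (rule degree_sum_le[OF fA])
    fix a assume "a \<in> A"
    then have "degree (\<Prod>c\<in>A - {a}. [:- xK th la c, 1:]) \<le> card R"
      using degree_prod_linear[of "A - {a}"] fA cA by simp
    then show "degree (smult (pi_up th la a) (\<Prod>c\<in>A - {a}. [:- xK th la c, 1:])) \<le> card R"
      by (meson degree_smult_le le_trans)
  qed
  have degR: "degree ?R \<le> card R"
    using degree_prod_linear[OF fR] by (simp add: R_def)
  show ?thesis
  proof (rule poly_eqI_degree[where A="xK th la ` A"])
    show "card (xK th la ` A) > degree ?L" "card (xK th la ` A) > degree ?R"
      using degL degR cA card_image[OF inj] by linarith+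
  next
    fix z assume "z \<in> xK th la ` A"
    then obtain a0 where a0: "a0 \<in> A" "z = xK th la a0" by blast
    have vanish: "(\<Prod>c\<in>A - {a}. z - xK th la c) = 0" if "a \<in> A" "a \<noteq> a0" for a
      using a0 fA that by (intro prod_zero) auto
    have nonzero: "(\<Prod>c\<in>A - {a0}. xK th la a0 - xK th la c) \<noteq> 0"
      using fA inj a0 by (auto simp: prod_zero_iff dest: inj_onD)
    have "poly ?L z = (\<Sum>a\<in>A. pi_up th la a * (\<Prod>c\<in>A - {a}. z - xK th la c))"
      by (simp add: A_def poly_sum poly_prod)
    also have "\<dots> = pi_up th la a0 * (\<Prod>c\<in>A - {a0}. xK th la a0 - xK th la c)"
    proof -
      have "(\<Sum>a\<in>A - {a0}. pi_up th la a * (\<Prod>c\<in>A - {a}. z - xK th la c)) = 0"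
        using vanish by (intro sum.neutral) auto
      then show ?thesis by (simp add: sum.remove[OF fA a0(1)] a0(2))
    qed
    also have "\<dots> = (\<Prod>b\<in>R. xK th la a0 - yK th la b)"
      using nonzero unfolding pi_up_def A_def R_def by simp
    also have "\<dots> = poly ?R z" using a0 by (simp add: R_def poly_prod)
    finally show "poly ?L z = poly ?R z" .
  qed
qed

lemma poly_prod_linear_reflect:
  fixes w :: real
  assumes "w \<noteq> 0"
  shows "poly (\<Prod>c\<in>S. [:1, - f c:]) w = w ^ card S * poly (\<Prod>c\<in>S. [:- f c, 1:]) (1 / w)"
proof (cases "finite S")
  case True
  have "poly (\<Prod>c\<in>S. [:1, - f c:]) w = (\<Prod>c\<in>S. w * (1 / w - f c))"
    by (simp add: poly_prod) (rule prod.cong, use assms in \<open>auto simp: field_simps\<close>)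
  then show ?thesis by (simp add: poly_prod prod.distrib)
qed simp

text \<open>The reflected identity sum_a pi_a prod_{c /= a} (1 - x_c w) = prod_b (1 - y_b w), obtained
  from lagrange_z by substituting z = 1/w; it is the form needed for power series.\<close>
lemma lagrange_w:
  assumes y: "young la" and th: "th \<ge> 0"
  shows "(\<Sum>a\<in>addable_rows la. smult (pi_up th la a)
            (\<Prod>c\<in>addable_rows la - {a}. [:1, - xK th la c:]))
       = (\<Prod>b\<in>removable_rows la. [:1, - yK th la b:])"
    (is "?L = ?R")
proof -
  define A where "A = addable_rows la"
  define R where "R = removable_rows la"
  have fA: "finite A" and fR: "finite R" by (simp_all add: A_def R_def finite_addable finite_removable)
  have cA: "card A = card R + 1" using card_addable[OF y] by (simp add: A_def R_def)
  have degL: "degree ?L \<le> card R"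
    unfolding A_def[symmetric]
  proof (rule degree_sum_le[OF fA])
    fix a assume "a \<in> A"
    then have "degree (\<Prod>c\<in>A - {a}. [:1, - xK th la c:]) \<le> card R"
      using degree_prod_linear[of "A - {a}"] fA cA by simp
    then show "degree (smult (pi_up th la a) (\<Prod>c\<in>A - {a}. [:1, - xK th la c:])) \<le> card R"
      by (meson degree_smult_le le_trans)
  qed
  have degR: "degree ?R \<le> card R"
    using degree_prod_linear[OF fR] by (simp add: R_def)
  have LZ: "(\<Sum>a\<in>A. smult (pi_up th la a) (\<Prod>c\<in>A - {a}. [:- xK th la c, 1:]))
       = (\<Prod>b\<in>R. [:- yK th la b, 1:])" using lagrange_z[OF y th] by (simp add: A_def R_def)
  show ?thesis
  proof (rule poly_eqI_degree[where A="real ` {1..card R + 1}"])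
    show "card (real ` {1..card R + 1}) > degree ?L" "card (real ` {1..card R + 1}) > degree ?R"
      using degL degR by (simp_all add: card_image)
  next
    fix w assume "w \<in> real ` {1..card R + 1}"
    then have w: "w \<noteq> 0" by auto
    have "poly ?L w = (\<Sum>a\<in>A. pi_up th la a * (w ^ card R *
              poly (\<Prod>c\<in>A - {a}. [:- xK th la c, 1:]) (1 / w)))"
      unfolding A_def[symmetric] poly_sum poly_smult
    proof (rule sum.cong[OF refl])
      fix a assume "a \<in> A"
      then have "card (A - {a}) = card R" using fA cA by simp
      then show "pi_up th la a * poly (\<Prod>c\<in>A - {a}. [:1, - xK th la c:]) w =
        pi_up th la a * (w ^ card R * poly (\<Prod>c\<in>A - {a}. [:- xK th la c, 1:]) (1 / w))"
        using poly_prod_linear_reflect[OF w, of "xK th la" "A - {a}"] by simp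
    qed
    also have "\<dots> = w ^ card R *
        poly (\<Sum>a\<in>A. smult (pi_up th la a) (\<Prod>c\<in>A - {a}. [:- xK th la c, 1:])) (1 / w)"
      by (simp add: poly_sum sum_distrib_left mult_ac)
    also have "\<dots> = w ^ card R * poly (\<Prod>b\<in>R. [:- yK th la b, 1:]) (1 / w)"
      by (simp only: LZ)
    also have "\<dots> = poly ?R w"
      using poly_prod_linear_reflect[OF w, of "yK th la" R] by (simp add: R_def)
    finally show "poly ?L w = poly ?R w" .
  qed
qed

definition moment :: "real \<Rightarrow> nat \<Rightarrow> nat list \<Rightarrow> real" where
  "moment th k la = (\<Sum>a\<in>addable_rows la. pi_up th la a * xK th la a ^ k)"

definition corner_psum :: "real \<Rightarrow> nat \<Rightarrow> nat list \<Rightarrow> real" where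
  "corner_psum th j la =
     (\<Sum>a\<in>addable_rows la. xK th la a ^ j) - (\<Sum>b\<in>removable_rows la. yK th la b ^ j)"

text \<open>The transition measure has total mass 1 (evaluate lagrange_w at w = 0).\<close>
lemma moment_0:
  assumes y: "young la" and th: "th \<ge> 0"
  shows "moment th 0 la = 1"
  using arg_cong[OF lagrange_w[OF y th], of "\<lambda>p. poly p 0"]
  by (simp add: poly_sum poly_prod moment_def)

unbundle fps_syntax

text \<open>The series 1 - v X, its inverse sum_k v^k X^k, and vX/(1 - vX).  The predicate
  log_deriv F S says X F' = F S, i.e. S is X times the logarithmic derivative of F.\<close>
definition lin :: "real \<Rightarrow> real fps" where "lin v = 1 - fps_const v * fps_X"
definition geom :: "real \<Rightarrow> real fps" where "geom v = Abs_fps (\<lambda>k. v ^ k)"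
definition geom1 :: "real \<Rightarrow> real fps" where "geom1 v = Abs_fps (\<lambda>k. if k = 0 then 0 else v ^ k)"
definition log_deriv :: "real fps \<Rightarrow> real fps \<Rightarrow> bool" where
  "log_deriv F S \<longleftrightarrow> fps_X * fps_deriv F = F * S"

lemma fps_of_poly_lin: "fps_of_poly [:1, - v:] = lin v"
  by (rule fps_ext) (auto simp: lin_def fps_of_poly_nth coeff_pCons split: nat.split)

lemma lin_geom: "lin v * geom v = 1"
proof -
  have "lin v * geom v = geom v - fps_const v * (fps_X * geom v)" by (simp add: lin_def algebra_simps)
  also have "\<dots> = 1"
  proof (rule fps_ext)
    fix n show "(geom v - fps_const v * (fps_X * geom v)) $ n = 1 $ n"
      by (cases n) (simp_all add: geom_def)
  qed
  finally show ?thesis .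
qed

lemma log_deriv_mult: "log_deriv F S \<Longrightarrow> log_deriv G T \<Longrightarrow> log_deriv (F * G) (S + T)"
  unfolding log_deriv_def
proof -
  assume h: "fps_X * fps_deriv F = F * S" "fps_X * fps_deriv G = G * T"
  have "fps_X * fps_deriv (F * G) = F * (fps_X * fps_deriv G) + (fps_X * fps_deriv F) * G"
    by (simp add: algebra_simps)
  also have "\<dots> = F * G * (S + T)" using h by (simp add: algebra_simps)
  finally show "fps_X * fps_deriv (F * G) = F * G * (S + T)" .
qed

lemma log_deriv_prod:
  "finite S \<Longrightarrow> (\<And>i. i \<in> S \<Longrightarrow> log_deriv (f i) (s i)) \<Longrightarrow> log_deriv (\<Prod>i\<in>S. f i) (\<Sum>i\<in>S. s i)"
proof (induction S rule: finite_induct)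
  case (insert x F)
  then show ?case using log_deriv_mult[of "f x" "s x" "\<Prod>i\<in>F. f i" "\<Sum>i\<in>F. s i"] by simp
qed (simp add: log_deriv_def)

lemma log_deriv_lin: "log_deriv (lin v) (- geom1 v)"
  unfolding log_deriv_def
proof (rule fps_ext)
  fix n
  have "lin v * - geom1 v = - (geom1 v - fps_const v * (fps_X * geom1 v))"
    by (simp add: lin_def algebra_simps)
  moreover have "(fps_X * fps_deriv (lin v)) $ n = (if n = 1 then - v else 0)"
    by (cases n) (auto simp: lin_def)
  ultimately show "(fps_X * fps_deriv (lin v)) $ n = (lin v * - geom1 v) $ n"
    by (cases n; cases "n - 1") (auto simp: geom1_def)
qed

lemma log_deriv_geom: "log_deriv (geom v) (geom1 v)"
proof -
  define D where "D = fps_X * fps_deriv (geom v)"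
  have "fps_deriv (lin v * geom v) = 0" by (simp add: lin_geom)
  then have "fps_X * (lin v * fps_deriv (geom v) + fps_deriv (lin v) * geom v) = 0" by simp
  then have "lin v * D + (fps_X * fps_deriv (lin v)) * geom v = 0"
    by (simp add: D_def algebra_simps)
  then have "lin v * D = lin v * geom1 v * geom v"
    using log_deriv_lin[of v] unfolding log_deriv_def by (simp add: algebra_simps add_eq_0_iff)
  then have "(lin v * geom v) * D = (lin v * geom v) * (geom1 v * geom v)" by (simp add: algebra_simps)
  then have "D = geom1 v * geom v" by (simp add: lin_geom)
  then show ?thesis by (simp add: log_deriv_def D_def mult.commute)
qed

text \<open>The generating function N(z) = sum_k moment_k z^k = sum_a pi_a / (1 - x_a z) equals
  prod_b (1 - y_b z) / prod_a (1 - x_a z); its X-logarithmic derivative is therefore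
  sum_a x_a z/(1 - x_a z) - sum_b y_b z/(1 - y_b z) = sum_{j >= 1} q_j z^j.\<close>
lemma moment_series_log_deriv:
  assumes y: "young la" and th: "th \<ge> 0"
  shows "log_deriv (\<Sum>a\<in>addable_rows la. fps_const (pi_up th la a) * geom (xK th la a))
           ((\<Sum>a\<in>addable_rows la. geom1 (xK th la a)) + (\<Sum>b\<in>removable_rows la. - geom1 (yK th la b)))"
proof -
  define A where "A = addable_rows la"
  define R where "R = removable_rows la"
  define N where "N = (\<Sum>a\<in>A. fps_const (pi_up th la a) * geom (xK th la a))"
  have fA: "finite A" and fR: "finite R" by (simp_all add: A_def R_def finite_addable finite_removable)
  define M where "M = (\<Prod>b\<in>R. lin (yK th la b)) * (\<Prod>a\<in>A. geom (xK th la a))"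
  define B where "B = (\<Prod>a\<in>A. lin (xK th la a))"
  have log_M: "log_deriv M ((\<Sum>b\<in>R. - geom1 (yK th la b)) + (\<Sum>a\<in>A. geom1 (xK th la a)))"
    unfolding M_def by (intro log_deriv_mult log_deriv_prod fA fR log_deriv_lin log_deriv_geom)
  have BM: "B * M = (\<Prod>b\<in>R. lin (yK th la b))"
  proof -
    have "B * M = (\<Prod>b\<in>R. lin (yK th la b)) * (\<Prod>a\<in>A. lin (xK th la a) * geom (xK th la a))"
      by (simp add: B_def M_def prod.distrib algebra_simps)
    then show ?thesis by (simp add: lin_geom)
  qed
  have BN: "B * N = (\<Prod>b\<in>R. lin (yK th la b))"
  proof -
    have "B * N = (\<Sum>a\<in>A. fps_const (pi_up th la a) * (B * geom (xK th la a)))"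
      by (simp add: N_def sum_distrib_left algebra_simps)
    also have "\<dots> = (\<Sum>a\<in>A. fps_const (pi_up th la a) * (\<Prod>c\<in>A - {a}. lin (xK th la c)))"
    proof (rule sum.cong[OF refl])
      fix a assume "a \<in> A"
      then have "B * geom (xK th la a)
          = (lin (xK th la a) * geom (xK th la a)) * (\<Prod>c\<in>A - {a}. lin (xK th la c))"
        unfolding B_def using fA by (simp add: prod.remove algebra_simps)
      then show "fps_const (pi_up th la a) * (B * geom (xK th la a)) =
        fps_const (pi_up th la a) * (\<Prod>c\<in>A - {a}. lin (xK th la c))" by (simp add: lin_geom)
    qed
    also have "\<dots> = fps_of_poly (\<Sum>a\<in>addable_rows la. smult (pi_up th la a)
            (\<Prod>c\<in>addable_rows la - {a}. [:1, - xK th la c:]))"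
      by (simp add: fps_of_poly_sum fps_of_poly_smult fps_of_poly_prod fps_of_poly_lin A_def)
    also have "\<dots> = (\<Prod>b\<in>R. lin (yK th la b))"
      by (simp add: lagrange_w[OF y th] fps_of_poly_prod fps_of_poly_lin R_def)
    finally show ?thesis .
  qed
  have "B $ 0 = 1"
    unfolding B_def using fA by (induction A rule: finite_induct) (auto simp: lin_def)
  then have "B \<noteq> 0" by auto
  then have "M = N" using BM BN mult_left_cancel[of B M N] by simp
  then show ?thesis using log_M by (simp add: N_def A_def R_def add.commute)
qed

text \<open>Comparing coefficients of z^k: k moment_k = sum_{i<k} moment_i q_{k-i}.\<close>
lemma moment_rec:
  assumes y: "young la" and th: "th \<ge> 0" and k: "k \<ge> 1"
  shows "real k * moment th k la = (\<Sum>i<k. moment th i la * corner_psum th (k - i) la)"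
proof -
  define N where "N = (\<Sum>a\<in>addable_rows la. fps_const (pi_up th la a) * geom (xK th la a))"
  define S where "S = (\<Sum>a\<in>addable_rows la. geom1 (xK th la a))
                     + (\<Sum>b\<in>removable_rows la. - geom1 (yK th la b))"
  have N_nth: "N $ i = moment th i la" for i
    by (simp add: N_def moment_def geom_def fps_sum_nth)
  have S_nth: "S $ j = (if j = 0 then 0 else corner_psum th j la)" for j
    by (simp add: S_def corner_psum_def geom1_def fps_sum_nth sum_negf)
  have "(fps_X * fps_deriv N) $ k = (N * S) $ k"
    using moment_series_log_deriv[OF y th] by (simp add: log_deriv_def N_def S_def)
  moreover have "(fps_X * fps_deriv N) $ k = real k * moment th k la"
    using k by (simp add: N_nth)
  moreover have "(N * S) $ k = (\<Sum>i\<in>insert k {..<k}. moment th i la *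
                      (if k - i = 0 then 0 else corner_psum th (k - i) la))"
    unfolding fps_mult_nth N_nth S_nth by (rule sum.cong) auto
  ultimately show ?thesis by simp
qed

lemma binom_diff:
  fixes u t :: real
  shows "(u + t) ^ j - u ^ j = (\<Sum>i<j. real (j choose i) * t ^ (j - i) * u ^ i)"
proof -
  have "(u + t) ^ j = (\<Sum>i\<le>j. real (j choose i) * u ^ i * t ^ (j - i))"
    by (rule binomial_ring)
  also have "\<dots> = (\<Sum>i<j. real (j choose i) * u ^ i * t ^ (j - i)) + u ^ j"
    by (simp add: lessThan_Suc_atMost[symmetric])
  finally show ?thesis by (simp add: mult_ac)
qed

text \<open>By corner interlacing, q_j telescopes over rows, and the binomial theorem expresses it
  through the p^*_i: q_j = sum_{i<j} (j choose i) theta^(j-i) p^*_i + 0^j.\<close>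
lemma corner_psum_formula:
  assumes y: "young la"
  shows "corner_psum th j la
       = (\<Sum>i<j. real (j choose i) * th ^ (j - i) * pstar th i la) + 0 ^ j"
proof -
  define l where "l = length la"
  define u where "u = (\<lambda>r. real (row la r) - th * real r)"
  define v where "v = (\<lambda>r::nat. - th * real r)"
  have xu: "xK th la r = u r + th" if "1 \<le> r" for r
    using that by (simp add: xK_def u_def of_nat_diff algebra_simps)
  have xl: "xK th la (l + 1) = - th * real l" by (simp add: xK_def row_def l_def)
  have yu: "yK th la r = u r" for r by (simp add: yK_def u_def)
  have "corner_psum th j la = (\<Sum>r=1..l. (u r + th) ^ j - u r ^ j) + (- th * real l) ^ j"
    unfolding corner_psum_def corner_telescope[OF y, of "\<lambda>z. z ^ j" th] l_def[symmetric] xl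
    by (simp add: xu yu)
  also have "(\<Sum>r=1..l. (u r + th) ^ j - u r ^ j)
      = (\<Sum>r=1..l. ((u r + th) ^ j - u r ^ j) - ((v r + th) ^ j - v r ^ j))
        + (\<Sum>r=1..l. (v r + th) ^ j - v r ^ j)"
    by (simp add: sum_subtractf)
  also have "(\<Sum>r=1..l. (v r + th) ^ j - v r ^ j) = 0 ^ j - (- th * real l) ^ j"
  proof -
    define g where "g = (\<lambda>r::nat. (- th * real r) ^ j)"
    have "(\<Sum>r=1..l. (v r + th) ^ j - v r ^ j) = (\<Sum>r<l. g r - g (Suc r))"
      by (rule sum.reindex_bij_witness[of _ Suc "\<lambda>r. r - 1"])
        (auto simp: v_def g_def of_nat_diff algebra_simps)
    also have "\<dots> = g 0 - g l" by (rule sum_lessThan_telescope')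
    finally show ?thesis by (simp add: g_def)
  qed
  also have "(\<Sum>r=1..l. ((u r + th) ^ j - u r ^ j) - ((v r + th) ^ j - v r ^ j))
      = (\<Sum>r=1..l. \<Sum>i<j. real (j choose i) * th ^ (j - i) * (u r ^ i - v r ^ i))"
    by (rule sum.cong[OF refl]) (simp only: binom_diff sum_subtractf[symmetric] right_diff_distrib)
  also have "\<dots> = (\<Sum>i<j. real (j choose i) * th ^ (j - i) * pstar th i la)"
    by (subst sum.swap) (simp add: sum_distrib_left pstar_def u_def v_def l_def)
  finally show ?thesis by simp
qed

lemma Afil_corner_psum: "Afil th j (corner_psum th j)"
proof -
  have "Afil th j (\<lambda>la. (\<Sum>i<j. real (j choose i) * th ^ (j - i) * pstar th i la) + 0 ^ j)"
    by (intro Afil_add Afil_sum Afil_scale Afil_pstar Afil_const) auto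
  then show ?thesis by (rule Afil_cong) (simp add: corner_psum_formula)
qed

lemma Afil_moment:
  assumes th: "th \<ge> 0"
  shows "Afil th k (moment th k)"
proof (induction k rule: less_induct)
  case (less k)
  show ?case
  proof (cases "k = 0")
    case True
    then show ?thesis
      using Afil_const[of th 0 1] by (rule_tac Afil_cong) (auto simp: moment_0[OF _ th])
  next
    case False
    have "Afil th k (\<lambda>la. (1 / real k) * (\<Sum>i<k. moment th i la * corner_psum th (k - i) la))"
      by (intro Afil_scale Afil_sum Afil_mult[OF less Afil_corner_psum]) auto
    then show ?thesis
      by (rule Afil_cong) (use moment_rec[OF _ th, of _ k] False in \<open>simp add: field_simps\<close>)
  qed
qed

definition trans_mean :: "real \<Rightarrow> real poly \<Rightarrow> nat list \<Rightarrow> real" where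
  "trans_mean th G la = (\<Sum>a\<in>addable_rows la. pi_up th la a * poly G (xK th la a))"

lemma Afil_trans_mean:
  assumes th: "th \<ge> 0"
  shows "Afil th (degree G) (trans_mean th G)"
proof -
  have "Afil th (degree G) (\<lambda>la. \<Sum>i\<le>degree G. coeff G i * moment th i la)"
    by (intro Afil_sum Afil_scale Afil_mono[OF Afil_moment[OF th]]) auto
  then show ?thesis
  proof (rule Afil_cong)
    fix la :: "nat list"
    show "trans_mean th G la = (\<Sum>i\<le>degree G. coeff G i * moment th i la)"
      unfolding trans_mean_def moment_def poly_altdef
      by (simp add: sum_distrib_left sum_distrib_right mult_ac) (rule sum.swap)
  qed
qed

lemma trans_mean_1: "young la \<Longrightarrow> th \<ge> 0 \<Longrightarrow> trans_mean th 1 la = 1"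
  using moment_0[of la th] by (simp add: trans_mean_def moment_def)

subsection \<open>The up operator lowers the degree\<close>

text \<open>Adding the box a raises p^*_m by g_m(x_a), where
  g_m(x) = (x + 1 - theta)^m - (x - theta)^m has degree m - 1.\<close>
definition box_incr :: "real \<Rightarrow> nat \<Rightarrow> real poly" where
  "box_incr th m = [:1 - th, 1:] ^ m - [:- th, 1:] ^ m"

lemma poly_box_incr: "poly (box_incr th m) x = (x + 1 - th) ^ m - (x - th) ^ m"
  by (simp add: box_incr_def poly_power algebra_simps)

lemma degree_box_incr: "degree (box_incr th m) \<le> m - 1"
proof (cases "box_incr th m = 0")
  case False
  have "degree (box_incr th m) \<le> m" unfolding box_incr_def
    using degree_diff_le[of "[:1 - th, 1:] ^ m" m "[:- th, 1:] ^ m"]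
    by (simp add: degree_linear_power)
  moreover have "coeff (box_incr th m) m = 0" by (simp add: box_incr_def coeff_linear_power)
  then have "degree (box_incr th m) \<noteq> m" using False leading_coeff_0_iff by metis
  ultimately show ?thesis by linarith
qed simp

lemma pstar_ext:
  assumes "length la \<le> N"
  shows "pstar th m la = (\<Sum>i=1..N. (real (row la i) - th * real i) ^ m - (- th * real i) ^ m)"
  unfolding pstar_def
  by (rule sum.mono_neutral_left) (use assms in \<open>auto simp: row_def\<close>)

lemma pstar_add_box:
  assumes a: "a \<in> addable_rows la"
  shows "pstar th m (add_box la a) = pstar th m la + poly (box_incr th m) (xK th la a)"
proof -
  define N where "N = length la + 1"
  define f where "f = (\<lambda>r i. (real (row r i) - th * real i) ^ m - (- th * real i) ^ m)"
  have a1: "a \<in> {1..N}" using a by (auto simp: N_def addable_rows_def)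
  have incr: "f (add_box la a) i = f la i + (if i = a then poly (box_incr th m) (xK th la a) else 0)"
    for i using a a1
    by (auto simp: f_def row_add_box poly_box_incr xK_def of_nat_diff algebra_simps)
  have "pstar th m (add_box la a) = (\<Sum>i=1..N. f (add_box la a) i)"
    unfolding f_def by (rule pstar_ext) (simp add: N_def length_add_box)
  also have "\<dots> = (\<Sum>i=1..N. f la i)
      + (\<Sum>i=1..N. if i = a then poly (box_incr th m) (xK th la a) else 0)"
    unfolding incr by (rule sum.distrib)
  also have "(\<Sum>i=1..N. f la i) = pstar th m la"
    unfolding f_def by (rule pstar_ext[symmetric]) (simp add: N_def)
  finally show ?thesis using a1 by simp
qed

text \<open>up_weighted G ms la = sum_a pi_a G(x_a) (monomial ms)(la + box_a); for G = 1 this is the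
  up operator applied to a monomial.  Peeling off one factor p^*_m gives a recursion.\<close>
definition up_weighted :: "real \<Rightarrow> real poly \<Rightarrow> nat list \<Rightarrow> nat list \<Rightarrow> real" where
  "up_weighted th G ms la =
     (\<Sum>a\<in>addable_rows la. pi_up th la a * poly G (xK th la a) * pmon th ms (add_box la a))"

lemma up_weighted_Nil: "up_weighted th G [] la = trans_mean th G la"
  by (simp add: up_weighted_def trans_mean_def pmon_def)

lemma up_weighted_Cons:
  "up_weighted th G (m # ms) la
     = pstar th m la * up_weighted th G ms la + up_weighted th (G * box_incr th m) ms la"
  unfolding up_weighted_def
  by (simp add: pmon_def pstar_add_box algebra_simps sum.distrib sum_distrib_left
      cong: sum.cong)

text \<open>Up to an error of lower degree, up_weighted G ms factors as trans_mean G times the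
  monomial: induction on ms, the factor p^*_m being of degree m and g_m of degree m - 1.\<close>
lemma Afil_up_weighted_remainder:
  assumes th: "th \<ge> 0"
  shows "\<forall>m\<in>set ms. 1 \<le> m \<Longrightarrow> Afil th (degree G + sum_list ms - 1)
           (\<lambda>la. up_weighted th G ms la - trans_mean th G la * pmon th ms la)"
proof (induction ms arbitrary: G)
  case Nil
  show ?case using Afil_const[of th _ 0] by (rule Afil_cong) (simp add: up_weighted_Nil pmon_def)
next
  case (Cons m ms)
  let ?e = "degree G + sum_list (m # ms) - 1"
  have m: "1 \<le> m" and ms: "\<forall>m\<in>set ms. 1 \<le> m" using Cons.prems by auto
  have dG: "degree (G * box_incr th m) \<le> degree G + (m - 1)"
    using degree_mult_le[of G "box_incr th m"] degree_box_incr[of th m] by linarith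
  have peeled: "Afil th ?e (\<lambda>la. pstar th m la *
      (up_weighted th G ms la - trans_mean th G la * pmon th ms la))"
  proof (cases "ms = []")
    case True
    then show ?thesis using Afil_const[of th _ 0]
      by (rule_tac Afil_cong) (auto simp: up_weighted_Nil pmon_def)
  next
    case False
    then have "sum_list ms \<ge> 1" using ms by (cases ms) auto
    then show ?thesis by (intro Afil_mult[OF Afil_pstar[OF order.refl] Cons.IH[OF ms]]) auto
  qed
  have incr_rem: "Afil th ?e (\<lambda>la. up_weighted th (G * box_incr th m) ms la
      - trans_mean th (G * box_incr th m) la * pmon th ms la)"
    by (rule Afil_mono[OF Cons.IH[OF ms]]) (use dG m in auto)
  have incr_main: "Afil th ?e (\<lambda>la. trans_mean th (G * box_incr th m) la * pmon th ms la)"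
    by (rule Afil_mult[OF Afil_trans_mean[OF th] Afil_pmon[OF ms]]) (use dG m in auto)
  have "Afil th ?e (\<lambda>la. pstar th m la *
      (up_weighted th G ms la - trans_mean th G la * pmon th ms la)
      + ((up_weighted th (G * box_incr th m) ms la
      - trans_mean th (G * box_incr th m) la * pmon th ms la)
      + trans_mean th (G * box_incr th m) la * pmon th ms la))"
    by (intro Afil_add peeled incr_rem incr_main)
  then show ?case by (rule Afil_cong) (simp add: up_weighted_Cons pmon_def algebra_simps)
qed

lemma Afil_up_minus_id:
  assumes th: "th \<ge> 0" and F: "Afil th d F"
  shows "Afil th (d - 1) (\<lambda>la. up_op th F la - F la)"
proof -
  obtain L where L: "\<forall>(c, ms)\<in>set L. (\<forall>m\<in>set ms. 1 \<le> m) \<and> sum_list ms \<le> d"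
      "\<forall>la. young la \<longrightarrow> F la = lincomb th L la"
    using F unfolding Afil_def by blast
  have summand: "Afil th (d - 1) (\<lambda>la. c * (up_weighted th 1 ms la - pmon th ms la))"
    if "(c, ms) \<in> set L" for c ms
  proof -
    have "\<forall>m\<in>set ms. 1 \<le> m" "sum_list ms \<le> d" using L(1) that by auto
    then have "Afil th (d - 1) (\<lambda>la. up_weighted th 1 ms la - trans_mean th 1 la * pmon th ms la)"
      using Afil_mono[OF Afil_up_weighted_remainder[OF th, of ms 1]] by simp
    then have "Afil th (d - 1) (\<lambda>la. up_weighted th 1 ms la - pmon th ms la)"
      by (rule Afil_cong) (simp add: trans_mean_1 th)
    then show ?thesis by (rule Afil_scale)
  qed
  have "Afil th (d - 1) (\<lambda>la. \<Sum>(c, ms)\<leftarrow>L. c * (up_weighted th 1 ms la - pmon th ms la))"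
    using summand by (induction L) (auto intro!: Afil_add Afil_const)
  then show ?thesis
  proof (rule Afil_cong)
    fix la :: "nat list" assume y: "young la"
    have "up_op th F la = (\<Sum>(c, ms)\<leftarrow>L. c * up_weighted th 1 ms la)"
      using L(2) young_add_box[OF y]
      by (simp add: up_op_def lincomb_def up_weighted_def sum_list_sum_nth sum_distrib_left
          sum.swap[of _ "addable_rows la"] case_prod_beta algebra_simps)
    moreover have "(\<Sum>(c, ms)\<leftarrow>L'. c * (P ms - Q ms))
        = (\<Sum>(c, ms)\<leftarrow>L'. c * P ms) - (\<Sum>(c, ms)\<leftarrow>L'. c * Q ms)"
      for L' and P Q :: "nat list \<Rightarrow> real"
      by (induction L') (auto simp: algebra_simps)
    ultimately show "up_op th F la - F la
        = (\<Sum>(c, ms)\<leftarrow>L. c * (up_weighted th 1 ms la - pmon th ms la))"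
      using L(2) y by (simp add: lincomb_def)
  qed
qed

subsection \<open>Polynomial sequences\<close>

definition poly_seq :: "nat \<Rightarrow> (nat \<Rightarrow> real) \<Rightarrow> bool" where
  "poly_seq e f \<longleftrightarrow> (\<exists>P :: real poly. degree P \<le> e \<and> (\<forall>n. f n = poly P (real n)))"

lemma poly_seq_const: "poly_seq e (\<lambda>_. c)"
  unfolding poly_seq_def by (rule exI[of _ "[:c:]"]) simp

lemma poly_seq_add:
  assumes "poly_seq e f" "poly_seq e g"
  shows "poly_seq e (\<lambda>n. f n + g n)"
proof -
  obtain P Q where "degree P \<le> e" "\<forall>n. f n = poly P (real n)"
      "degree Q \<le> e" "\<forall>n. g n = poly Q (real n)"
    using assms unfolding poly_seq_def by blast
  then show ?thesis unfolding poly_seq_def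
    by (intro exI[of _ "P + Q"]) (auto intro: order.trans[OF degree_add_le_max])
qed

lemma poly_seq_scale:
  assumes "poly_seq e f"
  shows "poly_seq e (\<lambda>n. c * f n)"
proof -
  obtain P where "degree P \<le> e" "\<forall>n. f n = poly P (real n)"
    using assms unfolding poly_seq_def by blast
  then show ?thesis unfolding poly_seq_def
    by (intro exI[of _ "smult c P"]) (auto intro: order.trans[OF degree_smult_le])
qed

lemma poly_seq_mono: "poly_seq e f \<Longrightarrow> e \<le> e' \<Longrightarrow> poly_seq e' f"
  unfolding poly_seq_def by (meson order.trans)

lemma poly_seq_cong: "poly_seq e f \<Longrightarrow> (\<And>n. g n = f n) \<Longrightarrow> poly_seq e g"
  unfolding poly_seq_def by simp

lemma poly_seq_sum:
  "finite S \<Longrightarrow> (\<And>i. i \<in> S \<Longrightarrow> poly_seq e (f i)) \<Longrightarrow> poly_seq e (\<lambda>n. \<Sum>i\<in>S. f i n)"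
  by (induction S rule: finite_induct) (auto intro: poly_seq_add poly_seq_const)

lemma poly_seq_power: "poly_seq k (\<lambda>n. real n ^ k)"
  unfolding poly_seq_def by (rule exI[of _ "[:0, 1:] ^ k"]) (simp add: degree_linear_power poly_power)

text \<open>Faulhaber: sum_{i<n} i^k is a polynomial in n of degree k + 1, by strong induction on
  k from the telescoped binomial expansion of n^(k+1).\<close>
lemma poly_seq_power_sum: "poly_seq (k + 1) (\<lambda>n. \<Sum>i<n. real i ^ k)"
proof (induction k rule: less_induct)
  case (less k)
  define S where "S = (\<lambda>j n. \<Sum>i<n. real i ^ j)"
  have key: "real n ^ (k + 1) = real (k + 1) * S k n + (\<Sum>j<k. real (k + 1 choose j) * S j n)" for n
  proof -
    have "real n ^ (k + 1) = (\<Sum>i<n. (real i + 1) ^ (k + 1) - real i ^ (k + 1))"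
      using sum_lessThan_telescope[of "\<lambda>i. real i ^ (k + 1)" n] by (simp add: add.commute)
    also have "\<dots> = (\<Sum>i<n. \<Sum>j<k + 1. real (k + 1 choose j) * real i ^ j)"
      by (rule sum.cong[OF refl], subst binom_diff) simp
    also have "\<dots> = (\<Sum>j<k + 1. real (k + 1 choose j) * S j n)"
      by (subst sum.swap) (simp add: S_def sum_distrib_left)
    finally show ?thesis by simp
  qed
  have "poly_seq (k + 1) (\<lambda>n. (1 / real (k + 1)) *
      (real n ^ (k + 1) + (- 1) * (\<Sum>j<k. real (k + 1 choose j) * S j n)))"
  proof -
    have IH: "poly_seq (k + 1) (S j)" if "j < k" for j
      using poly_seq_mono[OF less[OF that], of "k + 1"] that by (simp add: S_def)
    show ?thesis by (intro poly_seq_scale poly_seq_add poly_seq_power poly_seq_sum IH) auto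
  qed
  then show ?case
  proof (rule poly_seq_cong)
    fix n show "(\<Sum>i<n. real i ^ k) =
      1 / real (k + 1) * (real n ^ (k + 1) + - 1 * (\<Sum>j<k. real (k + 1 choose j) * S j n))"
      using key[of n] by (simp add: S_def field_simps)
  qed
qed

lemma poly_seq_partial_sums:
  assumes "poly_seq e f"
  shows "poly_seq (e + 1) (\<lambda>n. \<Sum>i<n. f i)"
proof -
  obtain P where P: "degree P \<le> e" "\<forall>n. f n = poly P (real n)"
    using assms unfolding poly_seq_def by blast
  have "poly_seq (e + 1) (\<lambda>n. \<Sum>j\<le>degree P. coeff P j * (\<Sum>i<n. real i ^ j))"
    by (intro poly_seq_sum poly_seq_scale poly_seq_mono[OF poly_seq_power_sum]) (use P in auto)
  then show ?thesis
  proof (rule poly_seq_cong)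
    fix n show "(\<Sum>i<n. f i) = (\<Sum>j\<le>degree P. coeff P j * (\<Sum>i<n. real i ^ j))"
      using P(2) by (simp add: poly_altdef sum_distrib_left) (rule sum.swap)
  qed
qed

text \<open>M'_n is a probability measure, since the transition measures have mass 1.\<close>
lemma expect_one: "th \<ge> 0 \<Longrightarrow> expect th n (\<lambda>_. 1) = 1"
proof (induction n)
  case 0 then show ?case by (simp add: expect_def YY_0)
next
  case (Suc n)
  have "expect th (Suc n) (\<lambda>_. 1) = expect th n (up_op th (\<lambda>_. 1))" by (rule expect_Suc)
  also have "\<dots> = expect th n (\<lambda>_. 1)"
    by (rule expect_cong) (use Suc.prems in \<open>simp add: up_op_def moment_0[unfolded moment_def, simplified]\<close>)
  finally show ?case using Suc by simp
qed

lemma Afil_0_const: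
  assumes "Afil th 0 F"
  obtains c where "\<And>la. young la \<Longrightarrow> F la = c"
proof -
  obtain L where L: "\<forall>(c, ms)\<in>set L. (\<forall>m\<in>set ms. 1 \<le> m) \<and> sum_list ms \<le> 0"
      "\<forall>la. young la \<longrightarrow> F la = lincomb th L la"
    using assms unfolding Afil_def by blast
  have "\<forall>(c, ms)\<in>set L. ms = []"
  proof (intro ballI, clarify)
    fix c ms assume "(c, ms) \<in> set L"
    with L(1) have "\<forall>m\<in>set ms. 1 \<le> m" "sum_list ms = 0" by auto
    then show "ms = []" by (cases ms) auto
  qed
  then have "lincomb th L la = sum_list (map fst L)" for la
    by (induction L) (auto simp: lincomb_def pmon_def)
  then show ?thesis using L(2) by (intro that[of "sum_list (map fst L)"]) auto
qed

text \<open>Main induction on d: E_{n+1}[F] - E_n[F] = E_n[U F - F], and U F - F has degree d - 1.\<close>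
lemma expect_poly_seq:
  assumes th: "th \<ge> 0"
  shows "Afil th d F \<Longrightarrow> poly_seq d (\<lambda>n. expect th n F)"
proof (induction d arbitrary: F)
  case 0
  then obtain c where c: "\<And>la. young la \<Longrightarrow> F la = c" by (elim Afil_0_const) blast
  have "expect th n F = c" for n
  proof -
    have "expect th n F = c * expect th n (\<lambda>_. 1)"
      unfolding expect_scale[symmetric] by (rule expect_cong) (simp add: c)
    then show ?thesis by (simp add: expect_one[OF th])
  qed
  then show ?case by (rule poly_seq_cong[OF poly_seq_const])
next
  case (Suc d)
  define D where "D = (\<lambda>la. up_op th F la - F la)"
  have "poly_seq d (\<lambda>n. expect th n D)"
    using Suc.IH Afil_up_minus_id[OF th Suc.prems] by (simp add: D_def)
  then have "poly_seq (Suc d) (\<lambda>n. expect th 0 F + (\<Sum>i<n. expect th i D))"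
    using poly_seq_partial_sums by (intro poly_seq_add poly_seq_const) simp
  moreover have "expect th n F = expect th 0 F + (\<Sum>i<n. expect th i D)" for n
  proof (induction n)
    case (Suc n)
    have "expect th (Suc n) F = expect th n (\<lambda>la. F la + D la)"
      unfolding expect_Suc by (rule expect_cong) (simp add: D_def)
    then show ?case using Suc by (simp add: expect_add)
  qed simp
  ultimately show ?case by (rule poly_seq_cong)
qed

theorem theorem6:
  fixes th :: real and d :: nat and F :: "nat list \<Rightarrow> real"
  assumes "th > 0" and "F \<in> Adeg th d"
  shows "\<exists>P :: real poly. degree P \<le> d \<and>
           (\<forall>n. (\<Sum>la\<in>YY n. F la * Mp th n la) = poly P (real n))"
  using expect_poly_seq[OF less_imp_le[OF assms(1)] Adeg_imp_Afil[OF assms(2)]]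
  unfolding poly_seq_def expect_def .

end
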